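(* Let $n$ be a composite positive integer. Then there exists a normalized Latin square of size $n$ with entries in $\{1,\dots,n\}$ that is singular (its determinant as a real matrix is $0$).
   Context: A Latin square of size $n$ with entries in $\{1,\dots,n\}$ is an $n\times n$ matrix in which each of $1,\dots,n$ occurs exactly once in each row and each column; it is normalized if its first column is $(1,2,\dots,n)^T$. It is singular if it is not invertible as a real matrix. *)

theory Defs
  imports "Jordan_Normal_Form.Determinant"
begin

text \<open>An n x n matrix is represented by a function L :: nat => nat => nat,
  with rows/columns indexed by 0..n-1 (only values at i,j < n matter).\<close>

definition latin_square :: "nat \<Rightarrow> (nat \<Rightarrow> nat \<Rightarrow> nat) \<Rightarrow> bool" where
  "latin_square n L \<longleftrightarrow>
     (\<forall>i<n. (\<lambda>j. L i j) ` {..<n} = {1..n}) \<and>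
     (\<forall>j<n. (\<lambda>i. L i j) ` {..<n} = {1..n})"

definition normalized_latin_square :: "nat \<Rightarrow> (nat \<Rightarrow> nat \<Rightarrow> nat) \<Rightarrow> bool" where
  "normalized_latin_square n L \<longleftrightarrow> latin_square n L \<and> (\<forall>i<n. L i 0 = i + 1)"

definition real_matrix_of :: "nat \<Rightarrow> (nat \<Rightarrow> nat \<Rightarrow> nat) \<Rightarrow> real mat" where
  "real_matrix_of n L = mat n n (\<lambda>(i, j). real (L i j))"

definition singular :: "nat \<Rightarrow> (nat \<Rightarrow> nat \<Rightarrow> nat) \<Rightarrow> bool" where
  "singular n L \<longleftrightarrow> det (real_matrix_of n L) = 0"

end

theory Submission
  imports Defs "HOL-Number_Theory.Cong"
begin

text \<open>Write the composite \<open>n\<close> as \<open>a * b\<close> with \<open>a, b \<ge> 2\<close> and take the addition table of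
  \<open>\<int>/a \<times> \<int>/b\<close>, where the pair \<open>(x, y)\<close> indexes row and column \<open>x * b + y\<close> and is written
  as the entry \<open>x * b + y + 1\<close>; the first column is then \<open>1, \<dots>, n\<close>. Each entry is the sum of a
  term depending only on the \<open>\<int>/a\<close>-coordinates and a term depending only on the
  \<open>\<int>/b\<close>-coordinates, so the columns \<open>c\<close> of \<open>(0,0), (0,1), (1,0), (1,1)\<close> satisfy
  \<open>c\<^sub>0\<^sub>0 + c\<^sub>1\<^sub>1 = c\<^sub>0\<^sub>1 + c\<^sub>1\<^sub>0\<close>, a nontrivial linear dependency.\<close>

lemma composite_nat_factors:
  assumes "n > 1" and "\<not> prime (n :: nat)"
  obtains a b where "n = a * b" and "a \<ge> 2" and "b \<ge> 2"
proof -
  obtain a where a: "a dvd n" "a \<noteq> 1" "a \<noteq> n"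
    using assms prime_nat_iff by blast
  then obtain b where n: "n = a * b" by blast
  with assms a have "a \<ge> 2" "b \<ge> 2"
    by (auto simp: numeral_2_eq_2 not_less_eq_eq le_Suc_eq)
  with n that show ?thesis by blast
qed

lemma mult_add_less_inject:
  fixes b :: nat
  assumes "y < b" and "y' < b" and "x * b + y = x' * b + y'"
  shows "x = x'" and "y = y'"
proof -
  have "x = (x * b + y) div b" "y = (x * b + y) mod b"
    using assms(1) by simp_all
  moreover have "x' = (x' * b + y') div b" "y' = (x' * b + y') mod b"
    using assms(2) by simp_all
  ultimately show "x = x'" and "y = y'"
    using assms(3) by simp_all
qed

lemma latin_squareI_symmetric:
  assumes rows: "\<And>i. i < n \<Longrightarrow> (\<lambda>j. L i j) ` {..<n} = {1..n}"
    and sym: "\<And>i j. L i j = L j i"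
  shows "latin_square n L"
  unfolding latin_square_def using rows sym by simp

lemma singular_if_column_relation:
  assumes "j\<^sub>0 < n" "j\<^sub>1 < n" "j\<^sub>2 < n" "j\<^sub>3 < n" and "j\<^sub>0 \<notin> {j\<^sub>1, j\<^sub>2, j\<^sub>3}"
    and relation: "\<And>i. i < n \<Longrightarrow> L i j\<^sub>0 + L i j\<^sub>3 = L i j\<^sub>1 + L i j\<^sub>2"
  shows "singular n L"
proof -
  define A where "A = real_matrix_of n L"
  define \<delta> :: "nat \<Rightarrow> nat \<Rightarrow> real" where "\<delta> c j = (if j = c then 1 else 0)" for c j
  define v where "v = vec n (\<lambda>j. \<delta> j\<^sub>0 j - \<delta> j\<^sub>1 j - \<delta> j\<^sub>2 j + \<delta> j\<^sub>3 j)"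
  have A: "A \<in> carrier_mat n n"
    unfolding A_def real_matrix_of_def by simp
  have "v $ j\<^sub>0 = 1"
    using assms(1,5) by (simp add: v_def \<delta>_def)
  then have "v \<noteq> 0\<^sub>v n"
    using assms(1) by auto
  moreover have "A *\<^sub>v v = 0\<^sub>v n"
  proof (rule eq_vecI)
    fix i assume "i < dim_vec (0\<^sub>v n)"
    then have i: "i < n" by simp
    have delta_sum: "(\<Sum>j<n. real (L i j) * \<delta> c j) = real (L i c)" if "c < n" for c
      using that by (simp add: \<delta>_def if_distrib[of "(*) _"] cong: if_cong)
    have "(A *\<^sub>v v) $ i = (\<Sum>j<n. real (L i j) * v $ j)"
      using i A by (simp add: A_def real_matrix_of_def v_def scalar_prod_def lessThan_atLeast0)
    also have "\<dots> = real (L i j\<^sub>0) - real (L i j\<^sub>1) - real (L i j\<^sub>2) + real (L i j\<^sub>3)"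
      using assms(1-4)
      by (simp add: v_def ring_distribs sum.distrib sum_subtractf delta_sum)
    also have "\<dots> = 0"
      using relation[OF i] by (simp flip: of_nat_add)
    finally show "(A *\<^sub>v v) $ i = 0\<^sub>v n $ i"
      using i by simp
  qed (use A in simp)
  moreover have "v \<in> carrier_vec n"
    by (simp add: v_def)
  ultimately have "det A = 0"
    using det_0_iff_vec_prod_zero[OF A] by blast
  then show ?thesis
    unfolding singular_def A_def .
qed

definition cyclic_product_square :: "nat \<Rightarrow> nat \<Rightarrow> nat \<Rightarrow> nat \<Rightarrow> nat" where
  "cyclic_product_square a b i j =
     ((i div b + j div b) mod a) * b + (i mod b + j mod b) mod b + 1"

lemma cyclic_product_square_commute:
  "cyclic_product_square a b i j = cyclic_product_square a b j i"
  unfolding cyclic_product_square_def by (simp add: add.commute)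

lemma cyclic_product_square_row:
  assumes "0 < a" and "0 < b" and "i < a * b"
  shows "(\<lambda>j. cyclic_product_square a b i j) ` {..<a * b} = {1..a * b}"
proof (rule card_subset_eq)
  let ?L = "cyclic_product_square a b i"
  let ?x = "\<lambda>j. (i div b + j div b) mod a" and ?y = "\<lambda>j. (i mod b + j mod b) mod b"
  have L: "?L j = ?x j * b + ?y j + 1" for j
    unfolding cyclic_product_square_def ..
  have "inj_on ?L {..<a * b}"
  proof (rule inj_onI)
    fix j j' assume "j \<in> {..<a * b}" "j' \<in> {..<a * b}" and "?L j = ?L j'"
    then have j: "j div b < a" "j' div b < a" and eq: "?x j * b + ?y j = ?x j' * b + ?y j'"
      by (simp_all add: L less_mult_imp_div_less)
    have "?x j = ?x j'" and "?y j = ?y j'"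
      using mult_add_less_inject[OF mod_less_divisor[OF assms(2)] mod_less_divisor[OF assms(2)] eq]
      by simp_all
    then have "[i div b + j div b = i div b + j' div b] (mod a)"
      and "[i mod b + j mod b = i mod b + j' mod b] (mod b)"
      unfolding cong_def .
    then have "[j div b = j' div b] (mod a)" and "[j mod b = j' mod b] (mod b)"
      by (simp_all only: cong_add_lcancel_nat)
    with j have "j div b = j' div b" and "j mod b = j' mod b"
      by (simp_all add: cong_def)
    then show "j = j'"
      by (metis div_mult_mod_eq)
  qed
  then show "card (?L ` {..<a * b}) = card {1..a * b}"
    by (simp add: card_image)
  show "?L ` {..<a * b} \<subseteq> {1..a * b}"
  proof clarify
    fix j
    have "?x j * b + ?y j < ?x j * b + b"
      using assms(2) by simp
    also have "\<dots> \<le> a * b"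
      using mult_le_mono1[of "Suc (?x j)" a b] mod_less_divisor[OF assms(1)]
      by (simp add: Suc_le_eq add.commute)
    finally show "?L j \<in> {1..a * b}"
      by (simp only: L) simp
  qed
qed simp

lemma cyclic_product_square_first_column:
  assumes "i < a * b"
  shows "cyclic_product_square a b i 0 = i + 1"
  using assms by (simp add: cyclic_product_square_def less_mult_imp_div_less)

lemma cyclic_product_square_column_relation:
  assumes "b \<ge> 2"
  shows "cyclic_product_square a b i 0 + cyclic_product_square a b i (b + 1)
       = cyclic_product_square a b i 1 + cyclic_product_square a b i b"
proof -
  have "1 div b = 0" "1 mod b = 1" "b div b = 1" "b mod b = 0" "(b + 1) div b = 1" "(b + 1) mod b = 1"
    using assms div_add_self2[of b 1] mod_add_self2[of 1 b] by simp_all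
  then show ?thesis
    by (simp add: cyclic_product_square_def)
qed

lemma normalized_latin_square_cyclic_product_square:
  assumes "0 < a" and "0 < b"
  shows "normalized_latin_square (a * b) (cyclic_product_square a b)"
  unfolding normalized_latin_square_def
proof
  show "latin_square (a * b) (cyclic_product_square a b)"
    using cyclic_product_square_row[OF assms] cyclic_product_square_commute
    by (rule latin_squareI_symmetric)
qed (simp add: cyclic_product_square_first_column)

lemma singular_cyclic_product_square:
  assumes "a \<ge> 2" and "b \<ge> 2"
  shows "singular (a * b) (cyclic_product_square a b)"
proof (rule singular_if_column_relation)
  have "2 * b \<le> a * b"
    using assms(1) by simp
  with assms(2) show "0 < a * b" "1 < a * b" "b < a * b" "b + 1 < a * b"
    by linarith+
qed (use assms(2) cyclic_product_square_column_relation in auto)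

theorem mainTheorem5:
  fixes n :: nat
  assumes "n > 1" and "\<not> prime n"
  shows "\<exists>L. normalized_latin_square n L \<and> singular n L"
proof -
  obtain a b where "n = a * b" and "a \<ge> 2" "b \<ge> 2"
    using composite_nat_factors[OF assms] .
  then have "normalized_latin_square n (cyclic_product_square a b)"
    and "singular n (cyclic_product_square a b)"
    using normalized_latin_square_cyclic_product_square singular_cyclic_product_square
    by simp_all
  then show ?thesis
    by blast
qed

end
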